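(* Let $n\geq 1$, let $H$ be an irreducible subgroup of $SL(n,\mathbb{C})$, let $u\in U_n(H)$ and suppose $\pi_n(u)$ has order $d$ in $Z_n(H)$. Then $u$ is conjugate in $SL(n,\mathbb{C})$ to the block diagonal matrix $$\lambda\,\mathrm{diag}\big(I_{n/d},\ \xi^{n/d}I_{n/d},\ \xi^{2n/d}I_{n/d},\dots,\ \xi^{(n/d)(d-1)}I_{n/d}\big)$$ for some $\lambda\in\mathbb{C}^*$, where $\lambda\in\langle\xi\rangle$ if $d$ is odd or if $d$ and $n/d$ are both even, and $\lambda\in \mu\langle \xi\rangle$ where $\mu$ is a square root of $\xi^{-(n/d)(d-1)}$ if $d$ is even and $n/d$ is odd.
   Context: Let $\xi=e^{2\pi i/n}$; the center of $SL(n,\mathbb{C})$ is $\langle \xi I_n\rangle$. $\pi_n:SL(n,\mathbb{C})\to PSL(n,\mathbb{C})=SL(n,\mathbb{C})/\langle \xi I_n\rangle$ is the quotient map. A subgroup $H\le SL(n,\mathbb{C})$ is irreducible if no nonzero proper subspace of $\mathbb{C}^n$ is $H$-invariant. $Z_n(H)$ is the centralizer of $\pi_n(H)$ in $PSL(n,\mathbb{C})$, and $U_n(H)=\pi_n^{-1}(Z_n(H))=\{g\in SL(n,\mathbb{C}) : [g,h]\in\langle\xi I_n\rangle \text{ for all } h\in H\}$, where $[g,h]=ghg^{-1}h^{-1}$. *)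

theory Defs
  imports "Jordan_Normal_Form.Determinant" Complex_Main
begin

definition xi :: "nat \<Rightarrow> complex" where
  "xi n = exp (2 * pi * \<i> / of_nat n)"

definition SL :: "nat \<Rightarrow> complex mat set" where
  "SL n = {A \<in> carrier_mat n n. det A = 1}"

text \<open>Two-sided inverse of a square matrix (meaningful for invertible matrices).\<close>
definition minv :: "complex mat \<Rightarrow> complex mat" where
  "minv A = (SOME B. B \<in> carrier_mat (dim_row A) (dim_row A) \<and>
                     A * B = 1\<^sub>m (dim_row A) \<and> B * A = 1\<^sub>m (dim_row A))"

definition commutator :: "complex mat \<Rightarrow> complex mat \<Rightarrow> complex mat" where
  "commutator g h = g * h * minv g * minv h"

definition centre_SL :: "nat \<Rightarrow> complex mat set" where
  "centre_SL n = {xi n ^ k \<cdot>\<^sub>m 1\<^sub>m n | k. True}"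

definition subgroup_SL :: "nat \<Rightarrow> complex mat set \<Rightarrow> bool" where
  "subgroup_SL n H \<longleftrightarrow> H \<subseteq> SL n \<and> 1\<^sub>m n \<in> H \<and>
     (\<forall>A\<in>H. \<forall>B\<in>H. A * B \<in> H) \<and> (\<forall>A\<in>H. minv A \<in> H)"

definition subspace_vec :: "nat \<Rightarrow> complex vec set \<Rightarrow> bool" where
  "subspace_vec n W \<longleftrightarrow> W \<subseteq> carrier_vec n \<and> 0\<^sub>v n \<in> W \<and>
     (\<forall>v\<in>W. \<forall>w\<in>W. v + w \<in> W) \<and> (\<forall>c. \<forall>v\<in>W. c \<cdot>\<^sub>v v \<in> W)"

definition irreducible_SL :: "nat \<Rightarrow> complex mat set \<Rightarrow> bool" where
  "irreducible_SL n H \<longleftrightarrow>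
     \<not> (\<exists>W. subspace_vec n W \<and> W \<noteq> {0\<^sub>v n} \<and> W \<noteq> carrier_vec n \<and>
            (\<forall>h\<in>H. \<forall>w\<in>W. h *\<^sub>v w \<in> W))"

text \<open>U_n(H) = preimage of the centralizer of pi_n(H) in PSL(n,C).\<close>
definition U :: "nat \<Rightarrow> complex mat set \<Rightarrow> complex mat set" where
  "U n H = {g \<in> SL n. \<forall>h\<in>H. commutator g h \<in> centre_SL n}"

text \<open>pi_n(u) has order d (in PSL(n,C), equivalently in the subgroup Z_n(H)).\<close>
definition proj_order :: "nat \<Rightarrow> complex mat \<Rightarrow> nat \<Rightarrow> bool" where
  "proj_order n u d \<longleftrightarrow> d > 0 \<and> u ^\<^sub>m d \<in> centre_SL n \<and>
     (\<forall>e. 0 < e \<and> e < d \<longrightarrow> u ^\<^sub>m e \<notin> centre_SL n)"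

text \<open>diag(I_{n/d}, xi^{n/d} I_{n/d}, ..., xi^{(n/d)(d-1)} I_{n/d}).\<close>
definition block_diag_roots :: "nat \<Rightarrow> nat \<Rightarrow> complex mat" where
  "block_diag_roots n d = mat n n (\<lambda>(i,j). if i = j then xi n ^ ((n div d) * (i div (n div d))) else 0)"

end

theory Submission
  imports Defs "Jordan_Normal_Form.Jordan_Normal_Form_Existence" "Jordan_Normal_Form.Spectral_Radius"
begin

text \<open>For every \<open>h \<in> H\<close> the commutator of \<open>u\<close> and \<open>h\<close> is a scalar \<open>c\<^sub>h\<close>, and these scalars form
  a submonoid of the \<open>d\<close>-th roots of unity because \<open>u\<^sup>d\<close> is central. If they were all \<open>(d/g)\<close>-th
  roots for some \<open>g > 1\<close>, then \<open>u\<^bsup>d/g\<^esup>\<close> would commute with the irreducible group \<open>H\<close> and hence be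
  central by Schur's lemma, contradicting the order \<open>d\<close>. So \<open>u h = \<xi>\<^sub>d h u\<close> for some \<open>h\<close>: \<open>u\<close> is
  conjugate to \<open>\<xi>\<^sub>d u\<close> and its spectrum is invariant under multiplication by \<open>\<xi>\<^sub>d\<close>. As \<open>u\<^sup>d\<close> is
  scalar, \<open>u\<close> is diagonalizable with eigenvalues on one orbit \<open>\<lambda> \<xi>\<^sub>d\<^sup>b\<close>, each of multiplicity
  \<open>n/d\<close>; this is the block form, and \<open>det u = 1 = \<lambda>\<^sup>n (-1)\<^bsup>(n/d)(d-1)\<^esup>\<close> constrains \<open>\<lambda>\<close>.\<close>

lemma xi_power_eq_cis: "xi n ^ j = cis (2 * pi * real j / real n)"
  unfolding xi_def cis_conv_exp by (simp add: exp_of_nat_mult[symmetric] algebra_simps)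

lemma xi_nonzero [simp]: "xi n \<noteq> 0"
  unfolding xi_def by simp

lemma xi_power_self: "0 < n \<Longrightarrow> xi n ^ n = 1"
  unfolding xi_power_eq_cis by simp

lemma xi_power_factor: "n = q * d \<Longrightarrow> 0 < q \<Longrightarrow> xi n ^ q = xi d"
  using xi_power_eq_cis[of n q] xi_power_eq_cis[of d 1] by simp

lemma xi_power_inj: "b < n \<Longrightarrow> c < n \<Longrightarrow> xi n ^ b = xi n ^ c \<Longrightarrow> b = c"
  using bij_betw_roots_unity[of n] unfolding bij_betw_def inj_on_def xi_power_eq_cis by auto

lemma root_of_unity_eq_xi_power:
  assumes "0 < n" and "z ^ n = 1"
  shows "\<exists>j<n. z = xi n ^ j"
  using bij_betw_roots_unity[OF assms(1)] assms(2) unfolding bij_betw_def xi_power_eq_cis by auto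

lemma xi_in_root_of_unity_submonoid:
  fixes C :: "complex set"
  assumes d: "0 < d" and one: "1 \<in> C" and mult: "\<And>a b. a \<in> C \<Longrightarrow> b \<in> C \<Longrightarrow> a * b \<in> C"
    and roots: "\<And>c. c \<in> C \<Longrightarrow> c ^ d = 1"
    and exponent: "\<And>j. 0 < j \<Longrightarrow> j < d \<Longrightarrow> \<exists>c\<in>C. c ^ j \<noteq> 1"
  shows "xi d \<in> C"
proof -
  let ?w = "xi d"
  have w_d: "?w ^ d = 1" using xi_power_self[OF d] .
  have power_closed: "c ^ k \<in> C" if "c \<in> C" for c k
    by (induct k) (use one mult that in auto)
  define g where "g = (LEAST g. 0 < g \<and> ?w ^ g \<in> C)"
  have "0 < d \<and> ?w ^ d \<in> C" using d w_d one by simp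
  then have g: "0 < g" "?w ^ g \<in> C"
    using LeastI[of "\<lambda>g. 0 < g \<and> ?w ^ g \<in> C"] unfolding g_def by auto
  have g_dvd: "g dvd b" if "?w ^ b \<in> C" for b
  proof -
    \<comment> \<open>\<open>(?w ^ g) ^ (d - 1)\<close> inverts \<open>?w ^ g\<close>, so \<open>C\<close> contains \<open>?w ^ (b mod g)\<close>.\<close>
    have "b + g * ((d - 1) * (b div g)) = b mod g + d * (g * (b div g))"
      using d div_mult_mod_eq[of b g] by (cases d) (simp_all add: algebra_simps)
    then have "?w ^ b * (?w ^ g) ^ ((d - 1) * (b div g)) = ?w ^ (b mod g) * (?w ^ d) ^ (g * (b div g))"
      by (simp only: power_add[symmetric] power_mult[symmetric])
    then have "?w ^ (b mod g) = ?w ^ b * (?w ^ g) ^ ((d - 1) * (b div g))"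
      using w_d by simp
    then have "?w ^ (b mod g) \<in> C" using mult[OF that power_closed[OF g(2)]] by simp
    then have "\<not> 0 < b mod g"
      using not_less_Least[of "b mod g" "\<lambda>g. 0 < g \<and> ?w ^ g \<in> C"] g(1) unfolding g_def[symmetric]
      by auto
    then show ?thesis by auto
  qed
  have "g dvd d" using g_dvd w_d one by simp
  have exponent_g: "c ^ (d div g) = 1" if c: "c \<in> C" for c
  proof -
    obtain b where b: "c = ?w ^ b" using root_of_unity_eq_xi_power[OF d roots[OF c]] by auto
    obtain t where t: "b = g * t" using g_dvd c b by auto
    have "c ^ (d div g) = ?w ^ (g * t * (d div g))" using b t by (simp add: power_mult)
    also have "g * t * (d div g) = d * t" using \<open>g dvd d\<close> by (metis dvd_mult_div_cancel mult.commute mult.left_commute)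
    also have "?w ^ (d * t) = 1" using w_d by (simp add: power_mult)
    finally show ?thesis .
  qed
  have "g = 1"
  proof (rule ccontr)
    assume "g \<noteq> 1"
    then have "0 < d div g" "d div g < d"
      using \<open>g dvd d\<close> g(1) d by (auto simp: dvd_div_eq_0_iff)
    then show False using exponent exponent_g by blast
  qed
  then show ?thesis using g(2) by simp
qed

lemma smult_smult_mat: "a \<cdot>\<^sub>m (b \<cdot>\<^sub>m A) = (a * b :: 'a :: semigroup_mult) \<cdot>\<^sub>m A"
  by (intro eq_matI) (auto simp: mult.assoc)

lemma one_smult_mat [simp]: "(1 :: 'a :: monoid_mult) \<cdot>\<^sub>m A = A"
  by (intro eq_matI) auto

lemma det_pow_mat: "A \<in> carrier_mat n n \<Longrightarrow> det (A ^\<^sub>m k) = det A ^ k"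
  by (induct k) (simp_all add: det_mult[of _ n])

lemma minv_eqI:
  assumes A: "A \<in> carrier_mat n n" and B: "B \<in> carrier_mat n n" and AB: "A * B = 1\<^sub>m n"
  shows "minv A = B"
proof -
  have BA: "B * A = 1\<^sub>m n" by (rule mat_mult_left_right_inverse[OF A B AB])
  let ?inverse = "\<lambda>B'. B' \<in> carrier_mat n n \<and> A * B' = 1\<^sub>m n \<and> B' * A = 1\<^sub>m n"
  have "?inverse (minv A)"
    unfolding minv_def using A someI[of ?inverse B] B AB BA by auto
  then have C: "minv A \<in> carrier_mat n n" and CA: "minv A * A = 1\<^sub>m n" by auto
  have "minv A = minv A * (A * B)" using AB C by simp
  also have "\<dots> = B" using C CA A B by (simp add: assoc_mult_mat[symmetric, of _ n n _ n _ n])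
  finally show ?thesis .
qed

lemma
  assumes A: "A \<in> carrier_mat n n" and "det A \<noteq> 0"
  shows minv_carrier: "minv A \<in> carrier_mat n n"
    and mult_minv: "A * minv A = 1\<^sub>m n"
    and minv_mult: "minv A * A = 1\<^sub>m n"
proof -
  obtain B where B: "B \<in> carrier_mat n n" "A * B = 1\<^sub>m n" "B * A = 1\<^sub>m n"
    using det_non_zero_imp_unit[OF assms, of undefined] unfolding Units_def ring_mat_def by auto
  then show "minv A \<in> carrier_mat n n" "A * minv A = 1\<^sub>m n" "minv A * A = 1\<^sub>m n"
    using minv_eqI[OF A B(1,2)] by auto
qed

lemma commutator_eq_smult_one:
  assumes g: "g \<in> carrier_mat n n" and h: "h \<in> carrier_mat n n"
    and "det g \<noteq> 0" and "det h \<noteq> 0" and "commutator g h = c \<cdot>\<^sub>m 1\<^sub>m n"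
  shows "g * h = c \<cdot>\<^sub>m (h * g)"
proof -
  note g' = minv_carrier[OF g assms(3)] minv_mult[OF g assms(3)]
    and h' = minv_carrier[OF h assms(4)] minv_mult[OF h assms(4)]
  have "minv h * (h * g) = g" using g h h' by (simp add: assoc_mult_mat[symmetric, of _ n n _ n _ n])
  then have "commutator g h * (h * g) = g * h"
    unfolding commutator_def using g h g' h' by (simp add: assoc_mult_mat[of _ n n _ n _ n])
  then show ?thesis
    using assms(5) g h by (simp add: mult_smult_assoc_mat[of _ n n _ n])
qed

lemma pow_mat_twisted_commute:
  fixes A :: "'a :: comm_semiring_1 mat"
  assumes A: "A \<in> carrier_mat n n" and B: "B \<in> carrier_mat n n"
    and AB: "A * B = c \<cdot>\<^sub>m (B * A)"
  shows "A ^\<^sub>m k * B = c ^ k \<cdot>\<^sub>m (B * A ^\<^sub>m k)"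
proof (induct k)
  case 0
  show ?case using A B by simp
next
  case (Suc k)
  have Ak: "A ^\<^sub>m k \<in> carrier_mat n n" using A by simp
  have "A ^\<^sub>m Suc k * B = A ^\<^sub>m k * (A * B)" using assoc_mult_mat[OF Ak A B] by simp
  also have "\<dots> = c \<cdot>\<^sub>m (A ^\<^sub>m k * B * A)"
    unfolding AB using Ak A B mult_smult_distrib[OF Ak mult_carrier_mat[OF B A]]
    by (simp add: assoc_mult_mat[of _ n n _ n _ n])
  also have "\<dots> = c ^ Suc k \<cdot>\<^sub>m (B * A ^\<^sub>m Suc k)"
    unfolding Suc using Ak A B
    by (simp add: mult_smult_assoc_mat[of _ n n _ n] assoc_mult_mat[of _ n n _ n _ n] smult_smult_mat mult.commute)
  finally show ?case .
qed

lemma subspace_vec_eigenspace: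
  fixes A :: "complex mat"
  assumes A: "A \<in> carrier_mat n n"
  shows "subspace_vec n {v \<in> carrier_vec n. A *\<^sub>v v = a \<cdot>\<^sub>v v}"
  unfolding subspace_vec_def using A
  by (auto simp: mult_add_distrib_mat_vec[OF A] smult_add_distrib_vec mult_mat_vec[OF A]
      smult_smult_assoc mult.commute)

lemma irreducible_SL_commuting_scalar:
  assumes n: "0 < n" and irr: "irreducible_SL n H" and H: "H \<subseteq> carrier_mat n n"
    and A: "A \<in> carrier_mat n n" and comm: "\<And>h. h \<in> H \<Longrightarrow> A * h = h * A"
  shows "\<exists>a. A = a \<cdot>\<^sub>m 1\<^sub>m n"
proof -
  obtain a where "a \<in> spectrum A" using spectrum_non_empty[OF A] n by auto
  then obtain v where v: "eigenvector A v a" unfolding spectrum_def eigenvalue_def by auto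
  define W where "W = {v \<in> carrier_vec n. A *\<^sub>v v = a \<cdot>\<^sub>v v}"
  have "h *\<^sub>v w \<in> W" if h: "h \<in> H" and w: "w \<in> W" for h w
  proof -
    have hc: "h \<in> carrier_mat n n" and wc: "w \<in> carrier_vec n" using h w H unfolding W_def by auto
    have "A *\<^sub>v (h *\<^sub>v w) = (h * A) *\<^sub>v w"
      using assoc_mult_mat_vec[OF A hc wc] comm[OF h] by simp
    also have "\<dots> = h *\<^sub>v (A *\<^sub>v w)" using assoc_mult_mat_vec[OF hc A wc] .
    also have "\<dots> = a \<cdot>\<^sub>v (h *\<^sub>v w)" using w hc wc unfolding W_def by (simp add: mult_mat_vec)
    finally show ?thesis unfolding W_def using mult_mat_vec_carrier[OF hc wc] by blast
  qed
  moreover have "W \<noteq> {0\<^sub>v n}" using v A unfolding W_def eigenvector_def by auto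
  moreover have "subspace_vec n W" unfolding W_def by (rule subspace_vec_eigenspace[OF A])
  ultimately have W: "W = carrier_vec n" using irr unfolding irreducible_SL_def by blast
  have "A $$ (i, j) = (a \<cdot>\<^sub>m 1\<^sub>m n) $$ (i, j)" if "i < n" "j < n" for i j
  proof -
    have "A $$ (i, j) = (A *\<^sub>v unit_vec n j) $ i"
      using A that by (simp add: scalar_prod_def if_distrib[of "\<lambda>x. _ * x"] sum.delta' cong: if_cong)
    also have "A *\<^sub>v unit_vec n j = a \<cdot>\<^sub>v unit_vec n j"
      using W \<open>j < n\<close> unit_vec_carrier[of n j] unfolding W_def by blast
    finally show ?thesis using that by simp
  qed
  then show ?thesis using A by (intro exI[of _ a] eq_matI) auto
qed

lemma scalar_mat_in_centre_SL:
  assumes "0 < n" and "det (a \<cdot>\<^sub>m 1\<^sub>m n) = 1"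
  shows "a \<cdot>\<^sub>m 1\<^sub>m n \<in> centre_SL n"
proof -
  obtain k where "a = xi n ^ k" using root_of_unity_eq_xi_power[OF assms(1), of a] assms(2) by auto
  then show ?thesis unfolding centre_SL_def by auto
qed

lemma irreducible_SL_centralizer_in_centre:
  assumes "0 < n" and "irreducible_SL n H" and "H \<subseteq> carrier_mat n n"
    and A: "A \<in> SL n" and "\<And>h. h \<in> H \<Longrightarrow> A * h = h * A"
  shows "A \<in> centre_SL n"
proof -
  obtain a where "A = a \<cdot>\<^sub>m 1\<^sub>m n"
    using irreducible_SL_commuting_scalar assms A unfolding SL_def by blast
  then show ?thesis using scalar_mat_in_centre_SL[OF assms(1)] A unfolding SL_def by auto
qed

definition commutator_scalars :: "complex mat \<Rightarrow> complex mat set \<Rightarrow> complex set" where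
  "commutator_scalars u H = {c. \<exists>h\<in>H. u * h = c \<cdot>\<^sub>m (h * u)}"

lemma U_commutator_eq_smult:
  assumes "subgroup_SL n H" and "u \<in> U n H" and "h \<in> H"
  shows "\<exists>c. u * h = c \<cdot>\<^sub>m (h * u)"
proof -
  obtain k where "commutator u h = xi n ^ k \<cdot>\<^sub>m 1\<^sub>m n"
    using assms(2,3) unfolding U_def centre_SL_def by auto
  moreover have "u \<in> carrier_mat n n" "det u = 1" "h \<in> carrier_mat n n" "det h = 1"
    using assms unfolding U_def SL_def subgroup_SL_def by auto
  ultimately show ?thesis using commutator_eq_smult_one[of u n h] by auto
qed

lemma commutator_scalars_mult:
  assumes u: "u \<in> carrier_mat n n" and "subgroup_SL n H"
    and "a \<in> commutator_scalars u H" and "b \<in> commutator_scalars u H"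
  shows "a * b \<in> commutator_scalars u H"
proof -
  obtain g h where gh: "g \<in> H" "u * g = a \<cdot>\<^sub>m (g * u)" "h \<in> H" "u * h = b \<cdot>\<^sub>m (h * u)"
    using assms(3,4) unfolding commutator_scalars_def by auto
  have H: "H \<subseteq> carrier_mat n n" "g * h \<in> H"
    using assms(2) gh unfolding subgroup_SL_def SL_def by auto
  with gh have g: "g \<in> carrier_mat n n" and h: "h \<in> carrier_mat n n" by auto
  have "u * (g * h) = (a \<cdot>\<^sub>m (g * u)) * h" using assoc_mult_mat[OF u g h] gh(2) by simp
  also have "\<dots> = a \<cdot>\<^sub>m (g * (u * h))"
    using mult_smult_assoc_mat[OF mult_carrier_mat[OF g u] h] assoc_mult_mat[OF g u h] by simp
  also have "\<dots> = a \<cdot>\<^sub>m (b \<cdot>\<^sub>m (g * h * u))"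
    unfolding gh(4) using mult_smult_distrib[OF g mult_carrier_mat[OF h u]] assoc_mult_mat[OF g h u] by simp
  also have "\<dots> = (a * b) \<cdot>\<^sub>m (g * h * u)" by (rule smult_smult_mat)
  finally show ?thesis using H unfolding commutator_scalars_def by auto
qed

lemma commutator_scalars_power_eq_1:
  assumes n: "0 < n" and u: "u \<in> carrier_mat n n" and ud: "u ^\<^sub>m d = s \<cdot>\<^sub>m 1\<^sub>m n" and s: "s \<noteq> 0"
    and "subgroup_SL n H" and "c \<in> commutator_scalars u H"
  shows "c ^ d = 1"
proof -
  obtain h where h: "h \<in> H" "u * h = c \<cdot>\<^sub>m (h * u)"
    using assms(6) unfolding commutator_scalars_def by auto
  have hc: "h \<in> carrier_mat n n" and "det h = 1"
    using assms(5) h(1) unfolding subgroup_SL_def SL_def by auto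
  \<comment> \<open>\<open>u\<^sup>d\<close> is central, so \<open>s \<cdot> h = c\<^sup>d s \<cdot> h\<close>, and \<open>h\<close> has a nonzero entry.\<close>
  have eq: "s \<cdot>\<^sub>m h = (c ^ d * s) \<cdot>\<^sub>m h"
    using pow_mat_twisted_commute[OF u hc h(2), of d] hc unfolding ud
    by (simp add: mult_smult_distrib[of _ n n _ n] mult_smult_assoc_mat[of _ n n _ n] smult_smult_mat)
  obtain i j where ij: "i < n" "j < n" "h $$ (i, j) \<noteq> 0"
  proof (rule ccontr)
    assume "\<not> thesis"
    with that have "h = 0\<^sub>m n n" using hc by (intro eq_matI) auto
    with \<open>det h = 1\<close> n show False by simp
  qed
  have "s * h $$ (i, j) = c ^ d * s * h $$ (i, j)"
    using arg_cong[OF eq, of "\<lambda>M. M $$ (i, j)"] ij hc by simp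
  then show ?thesis using s ij(3) by simp
qed

lemma xi_in_commutator_scalars:
  assumes n: "0 < n" and H: "subgroup_SL n H" and irr: "irreducible_SL n H"
    and uU: "u \<in> U n H" and ord: "proj_order n u d"
  shows "xi d \<in> commutator_scalars u H"
proof -
  have u: "u \<in> carrier_mat n n" and "det u = 1" using uU unfolding U_def SL_def by auto
  have Hc: "H \<subseteq> carrier_mat n n" using H unfolding subgroup_SL_def SL_def by auto
  have d: "0 < d" and "u ^\<^sub>m d \<in> centre_SL n"
    and not_central: "\<And>j. 0 < j \<Longrightarrow> j < d \<Longrightarrow> u ^\<^sub>m j \<notin> centre_SL n"
    using ord unfolding proj_order_def by auto
  then obtain k where ud: "u ^\<^sub>m d = xi n ^ k \<cdot>\<^sub>m 1\<^sub>m n" unfolding centre_SL_def by auto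
  have s: "xi n ^ k \<noteq> 0" by simp
  show ?thesis
  proof (rule xi_in_root_of_unity_submonoid[OF d])
    show "1 \<in> commutator_scalars u H"
      using H u unfolding commutator_scalars_def subgroup_SL_def by (intro CollectI bexI[of _ "1\<^sub>m n"]) auto
    show "\<And>a b. a \<in> commutator_scalars u H \<Longrightarrow> b \<in> commutator_scalars u H \<Longrightarrow>
        a * b \<in> commutator_scalars u H"
      by (rule commutator_scalars_mult[OF u H])
    show "\<And>c. c \<in> commutator_scalars u H \<Longrightarrow> c ^ d = 1"
      by (rule commutator_scalars_power_eq_1[OF n u ud s H])
  next
    fix j assume j: "0 < j" "j < d"
    show "\<exists>c\<in>commutator_scalars u H. c ^ j \<noteq> 1"
    proof (rule ccontr)
      assume "\<not> ?thesis"
      then have trivial: "c ^ j = 1" if "c \<in> commutator_scalars u H" for c using that by blast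
      have "u ^\<^sub>m j * h = h * u ^\<^sub>m j" if h: "h \<in> H" for h
      proof -
        obtain c where c: "u * h = c \<cdot>\<^sub>m (h * u)" using U_commutator_eq_smult[OF H uU h] by blast
        then have "c ^ j = 1" using trivial h unfolding commutator_scalars_def by blast
        then show ?thesis using pow_mat_twisted_commute[OF u _ c, of j] h Hc by auto
      qed
      moreover have "u ^\<^sub>m j \<in> SL n" using u \<open>det u = 1\<close> det_pow_mat[OF u] unfolding SL_def by simp
      ultimately have "u ^\<^sub>m j \<in> centre_SL n"
        using irreducible_SL_centralizer_in_centre[OF n irr Hc] by blast
      with not_central[OF j] show False ..
    qed
  qed
qed

lemma order_char_poly_twist_invariant:
  fixes A :: "complex mat"
  assumes A: "A \<in> carrier_mat n n" and h: "h \<in> carrier_mat n n" and "det h \<noteq> 0"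
    and c: "c \<noteq> 0" and twist: "A * h = c \<cdot>\<^sub>m (h * A)"
  shows "order (a * c) (char_poly A) = order a (char_poly A)"
proof -
  note h' = minv_carrier[OF h \<open>det h \<noteq> 0\<close>] mult_minv[OF h \<open>det h \<noteq> 0\<close>] minv_mult[OF h \<open>det h \<noteq> 0\<close>]
  have "A = h * (c \<cdot>\<^sub>m A) * minv h"
  proof -
    have "h * (c \<cdot>\<^sub>m A) = A * h" using twist A h by (simp add: mult_smult_distrib[of _ n n _ n])
    then show ?thesis using A h h' by (simp add: assoc_mult_mat[of _ n n _ n _ n])
  qed
  then have "similar_mat A (c \<cdot>\<^sub>m A)" using A h h' by (intro similar_matI[of _ _ _ _ n]) auto
  then show ?thesis using order_char_poly_smult[OF A c, of "a * c"] c by (simp add: char_poly_similar)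
qed

lemma four_block_diag_eq_smult_one:
  assumes A: "A \<in> carrier_mat k k" and D: "D \<in> carrier_mat m m"
    and eq: "four_block_mat A (0\<^sub>m k m) (0\<^sub>m m k) D = s \<cdot>\<^sub>m 1\<^sub>m (k + m)"
  shows "A = s \<cdot>\<^sub>m 1\<^sub>m k" and "D = s \<cdot>\<^sub>m 1\<^sub>m m"
proof -
  have entry: "four_block_mat A (0\<^sub>m k m) (0\<^sub>m m k) D $$ (i, j) = (s \<cdot>\<^sub>m 1\<^sub>m (k + m)) $$ (i, j)" for i j
    by (simp only: eq)
  show "A = s \<cdot>\<^sub>m 1\<^sub>m k"
  proof (rule eq_matI)
    fix i j assume "i < dim_row (s \<cdot>\<^sub>m 1\<^sub>m k)" "j < dim_col (s \<cdot>\<^sub>m 1\<^sub>m k)"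
    then show "A $$ (i, j) = (s \<cdot>\<^sub>m 1\<^sub>m k) $$ (i, j)" using entry[of i j] A D by simp
  qed (use A in auto)
  show "D = s \<cdot>\<^sub>m 1\<^sub>m m"
  proof (rule eq_matI)
    fix i j assume "i < dim_row (s \<cdot>\<^sub>m 1\<^sub>m m)" "j < dim_col (s \<cdot>\<^sub>m 1\<^sub>m m)"
    then show "D $$ (i, j) = (s \<cdot>\<^sub>m 1\<^sub>m m) $$ (i, j)" using entry[of "k + i" "k + j"] A D by simp
  qed (use D in auto)
qed

lemma jordan_block_pow_eq_smult_one:
  fixes a :: "'a :: field_char_0"
  assumes eq: "jordan_block k a ^\<^sub>m d = s \<cdot>\<^sub>m 1\<^sub>m k" and "0 < k" and s: "s \<noteq> 0" and d: "0 < d"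
  shows "k = 1 \<and> a ^ d = s"
proof -
  have entry: "(jordan_block k a ^\<^sub>m d) $$ (i, j) = (s \<cdot>\<^sub>m 1\<^sub>m k) $$ (i, j)" for i j
    by (simp only: eq)
  have ad: "a ^ d = s" using entry[of 0 0] \<open>0 < k\<close> unfolding jordan_block_pow by simp
  moreover have "\<not> 1 < k"
  proof
    assume "1 < k"
    then have "of_nat d * a ^ (d - 1) = 0" using entry[of 0 1] unfolding jordan_block_pow by simp
    then have "a = 0" using d by simp
    with ad s d show False by (simp add: zero_power)
  qed
  ultimately show ?thesis using \<open>0 < k\<close> by simp
qed

lemma jordan_matrix_pow_eq_smult_one:
  fixes n_as :: "(nat \<times> 'a :: field_char_0) list"
  assumes "jordan_matrix n_as ^\<^sub>m d = s \<cdot>\<^sub>m 1\<^sub>m (sum_list (map fst n_as))"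
    and "0 \<notin> fst ` set n_as" and "s \<noteq> 0" and "0 < d"
  shows "\<forall>(k, a)\<in>set n_as. k = 1 \<and> a ^ d = s"
  using assms(1,2)
proof (induct n_as)
  case (Cons ka n_as)
  obtain k a where ka: "ka = (k, a)" by force
  let ?N = "sum_list (map fst n_as)"
  have "four_block_mat (jordan_block k a ^\<^sub>m d) (0\<^sub>m k ?N) (0\<^sub>m ?N k) (jordan_matrix n_as ^\<^sub>m d)
      = s \<cdot>\<^sub>m 1\<^sub>m (k + ?N)"
    using Cons(2) unfolding ka jordan_matrix_Cons by (subst (asm) pow_four_block_mat) auto
  from four_block_diag_eq_smult_one[OF _ _ this] have
    "jordan_block k a ^\<^sub>m d = s \<cdot>\<^sub>m 1\<^sub>m k" "jordan_matrix n_as ^\<^sub>m d = s \<cdot>\<^sub>m 1\<^sub>m ?N" by auto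
  with Cons(1,3) jordan_block_pow_eq_smult_one[of k a d s] assms(3,4) show ?case unfolding ka by auto
qed simp

lemma jordan_matrix_blocks_of_size_one:
  assumes "\<forall>(k, a)\<in>set n_as. k = 1"
  shows "jordan_matrix n_as = mat_diag (length n_as) (\<lambda>i. map snd n_as ! i)"
  using assms
proof (induct n_as)
  case Nil
  show ?case unfolding mat_diag_def jordan_matrix_def by (intro eq_matI) auto
next
  case (Cons ka n_as)
  then obtain a where ka: "ka = (1, a)" by force
  have "sum_list (map fst n_as) = length n_as" using Cons(2) by (induct n_as) auto
  with Cons show ?case
    unfolding ka jordan_matrix_Cons by (intro eq_matI) (auto simp: mat_diag_def nth_Cons' jordan_block_def)
qed

lemma pow_eq_smult_one_diagonalizable:
  fixes A :: "complex mat"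
  assumes A: "A \<in> carrier_mat n n" and Ad: "A ^\<^sub>m d = s \<cdot>\<^sub>m 1\<^sub>m n" and "s \<noteq> 0" and "0 < d"
  obtains es where "length es = n" and "similar_mat A (mat_diag n (\<lambda>i. es ! i))"
    and "\<forall>a\<in>set es. a ^ d = s" and "\<And>a. count_list es a = order a (char_poly A)"
proof -
  obtain as where "char_poly A = (\<Prod>a\<leftarrow>as. [:- a, 1:])" using char_poly_factorized[OF A] by auto
  then obtain n_as where jnf: "jordan_nf A n_as" using jordan_nf_exists[OF A] by auto
  let ?J = "jordan_matrix n_as"
  obtain P Q where wit: "similar_mat_wit A ?J P Q"
    using jnf unfolding jordan_nf_def similar_mat_def by auto
  note PQ = similar_mat_witD2[OF A wit]
  have N: "sum_list (map fst n_as) = n" using PQ(5) by (metis carrier_matD(1) jordan_matrix_dim(1))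
  have "?J ^\<^sub>m d = Q * A ^\<^sub>m d * P" using similar_mat_wit_pow_id[OF similar_mat_wit_sym[OF wit]] .
  also have "\<dots> = s \<cdot>\<^sub>m 1\<^sub>m n"
    unfolding Ad using PQ by (simp add: mult_smult_distrib[of _ n n _ n] mult_smult_assoc_mat[of _ n n _ n])
  finally have "\<forall>(k, a)\<in>set n_as. k = 1 \<and> a ^ d = s"
    using jordan_matrix_pow_eq_smult_one[of n_as d s] jnf assms(3,4) N unfolding jordan_nf_def by auto
  then have ones: "\<forall>(k, a)\<in>set n_as. k = 1" and roots: "\<forall>a\<in>set (map snd n_as). a ^ d = s" by auto
  have len: "length n_as = n" using N ones by (induct n_as arbitrary: n) auto
  show thesis
  proof (rule that[of "map snd n_as"])
    show "similar_mat A (mat_diag n (\<lambda>i. map snd n_as ! i))"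
      using jnf jordan_matrix_blocks_of_size_one[OF ones] len unfolding jordan_nf_def by simp
    show "count_list (map snd n_as) a = order a (char_poly A)" for a
      unfolding jordan_nf_order[OF jnf] using ones by (induct n_as) auto
  qed (use len roots in auto)
qed

lemma mset_map_div_upt: "mset (map (\<lambda>i. f (i div q)) [0..<q * d]) = (\<Sum>b<d. replicate_mset q (f b))"
proof (induct d)
  case (Suc d)
  have "map (\<lambda>i. f (i div q)) [q * d..<q * d + q] = replicate q (f d)"
    by (rule nth_equalityI) (auto simp: algebra_simps)
  then show ?case
    using Suc upt_add_eq_append[of 0 "q * d" q] by (simp add: algebra_simps)
qed simp

lemma mset_rotation_invariant_roots:
  fixes es :: "complex list"
  assumes d: "0 < d" and s: "s \<noteq> 0" and roots: "\<forall>a\<in>set es. a ^ d = s"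
    and rot: "\<And>a. count_list es (a * xi d) = count_list es a" and lam: "lam \<in> set es"
  shows "mset es = (\<Sum>b<d. replicate_mset (count_list es lam) (lam * xi d ^ b))"
proof (rule multiset_eqI)
  fix a
  let ?M = "count_list es lam"
  have lam0: "lam \<noteq> 0" using roots lam s d by (auto simp: zero_power)
  have orbit: "count_list es (lam * xi d ^ b) = ?M" for b
  proof (induct b)
    case (Suc b)
    then show ?case using rot[of "lam * xi d ^ b"] by (simp add: algebra_simps)
  qed simp
  have "count (\<Sum>b<d. replicate_mset ?M (lam * xi d ^ b)) a = (\<Sum>b<d. if a = lam * xi d ^ b then ?M else 0)"
    by (simp add: count_sum)
  also have "\<dots> = count (mset es) a"
  proof (cases "\<exists>b<d. a = lam * xi d ^ b")
    case True
    then obtain b0 where b0: "b0 < d" "a = lam * xi d ^ b0" by auto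
    have "a = lam * xi d ^ b \<longleftrightarrow> xi d ^ b0 = xi d ^ b" for b
      using b0(2) lam0 by simp
    then have "a = lam * xi d ^ b \<longleftrightarrow> b = b0" if "b < d" for b
      using xi_power_inj[OF b0(1) that] by blast
    then have "(\<Sum>b<d. if a = lam * xi d ^ b then ?M else 0) = (\<Sum>b<d. if b = b0 then ?M else 0)"
      by (intro sum.cong) auto
    then show ?thesis using b0 orbit[of b0] by (simp add: count_mset)
  next
    case False
    have "a \<notin> set es"
    proof
      assume "a \<in> set es"
      then have "(a / lam) ^ d = 1" using roots lam s by (simp add: power_divide)
      then obtain b where "b < d" "a / lam = xi d ^ b" using root_of_unity_eq_xi_power[OF d] by blast
      with False lam0 show False by (auto simp: field_simps)
    qed
    then show ?thesis using False by (auto simp: count_mset count_list_0_iff)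
  qed
  finally show "count (mset es) a = count (\<Sum>b<d. replicate_mset ?M (lam * xi d ^ b)) a" ..
qed

lemma similar_mat_diag_mset_eq:
  fixes xs ys :: "'a :: field list"
  assumes "mset xs = mset ys"
  shows "similar_mat (mat_diag (length xs) (\<lambda>i. xs ! i)) (mat_diag (length ys) (\<lambda>i. ys ! i))"
proof -
  obtain p where p: "p permutes {..<length ys}" and xs: "permute_list p ys = xs"
    using mset_eq_permutation[OF assms] by blast
  define n where "n = length ys"
  have len: "length xs = n" using xs unfolding n_def by auto
  have p_lt: "p i < n" if "i < n" for i using p that unfolding n_def by (auto dest: permutes_in_image)
  have p_inj: "p i = p j \<longleftrightarrow> i = j" for i j using permutes_inj[OF p] by (auto dest: injD)
  have xs_nth: "xs ! i = ys ! p i" if "i < n" for i using xs that unfolding n_def permute_list_def by auto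
  define P where "P = mat n n (\<lambda>(i, j). if p i = j then 1 else (0 :: 'a))"
  define Q where "Q = mat n n (\<lambda>(i, j). if p j = i then 1 else (0 :: 'a))"
  let ?Dx = "mat_diag n (\<lambda>i. xs ! i)" and ?Dy = "mat_diag n (\<lambda>i. ys ! i)"
  have P: "P \<in> carrier_mat n n" and Q: "Q \<in> carrier_mat n n" unfolding P_def Q_def by auto
  have PQ: "P * Q = 1\<^sub>m n"
  proof (rule eq_matI)
    fix i j assume "i < dim_row (1\<^sub>m n)" "j < dim_col (1\<^sub>m n)"
    then have ij: "i < n" "j < n" by auto
    have "(P * Q) $$ (i, j) = (\<Sum>l = 0..<n. (if p i = l then 1 else 0) * (if p j = l then 1 else 0))"
      using ij unfolding P_def Q_def by (simp add: scalar_prod_def)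
    also have "\<dots> = (\<Sum>l = 0..<n. if p i = l then (if p j = l then 1 else 0) else 0)"
      by (rule sum.cong) auto
    also have "\<dots> = 1\<^sub>m n $$ (i, j)" using ij p_lt[OF ij(1)] p_inj[of j i] by (simp add: sum.delta)
    finally show "(P * Q) $$ (i, j) = 1\<^sub>m n $$ (i, j)" .
  qed (use P Q in auto)
  have QP: "Q * P = 1\<^sub>m n" by (rule mat_mult_left_right_inverse[OF P Q PQ])
  have "P * ?Dy = ?Dx * P"
    unfolding mat_diag_mult_right[OF P] mat_diag_mult_left[OF P]
    by (intro eq_matI) (auto simp: P_def xs_nth)
  have "?Dx = ?Dx * (P * Q)" unfolding PQ by (rule right_mult_one_mat[OF mat_diag_dim, symmetric])
  also have "\<dots> = P * ?Dy * Q"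
    using assoc_mult_mat[OF mat_diag_dim P Q] \<open>P * ?Dy = ?Dx * P\<close> by simp
  finally have "?Dx = P * ?Dy * Q" .
  then show ?thesis using P Q PQ QP len unfolding n_def[symmetric] by (intro similar_matI[of _ _ _ _ n]) auto
qed

lemma mat_diag_eq_smult_block_diag_roots:
  assumes "n = q * d" and "0 < q"
  shows "mat_diag n (\<lambda>i. lam * xi d ^ (i div q)) = lam \<cdot>\<^sub>m block_diag_roots n d"
proof -
  have "xi n ^ (n div d * (i div (n div d))) = xi d ^ (i div q)" if "i < n" for i
  proof -
    have "0 < d" using that assms by (cases d) auto
    then have "n div d = q" using assms by simp
    then show ?thesis using xi_power_factor[OF assms] by (simp add: power_mult)
  qed
  then show ?thesis unfolding mat_diag_def block_diag_roots_def by (intro eq_matI) auto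
qed

lemma similar_smult_block_diag_roots:
  fixes A :: "complex mat"
  assumes A: "A \<in> carrier_mat n n" and n: "0 < n" and d: "0 < d"
    and Ad: "A ^\<^sub>m d = s \<cdot>\<^sub>m 1\<^sub>m n" and s: "s \<noteq> 0"
    and rot: "\<And>a. order (a * xi d) (char_poly A) = order a (char_poly A)"
  shows "d dvd n \<and> (\<exists>lam. lam \<noteq> 0 \<and> similar_mat A (lam \<cdot>\<^sub>m block_diag_roots n d))"
proof -
  obtain es where len: "length es = n" and sim: "similar_mat A (mat_diag n (\<lambda>i. es ! i))"
    and roots: "\<forall>a\<in>set es. a ^ d = s" and count: "\<And>a. count_list es a = order a (char_poly A)"
    using pow_eq_smult_one_diagonalizable[OF A Ad s d] by blast
  define lam where "lam = es ! 0"
  define q where "q = count_list es lam"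
  let ?target = "map (\<lambda>i. lam * xi d ^ (i div q)) [0..<q * d]"
  have lam: "lam \<in> set es" using len n unfolding lam_def by auto
  have "mset es = (\<Sum>b<d. replicate_mset q (lam * xi d ^ b))"
    unfolding q_def by (rule mset_rotation_invariant_roots[OF d s roots _ lam]) (simp add: count rot)
  also have "\<dots> = mset ?target" by (rule mset_map_div_upt[symmetric])
  finally have "mset es = mset ?target" .
  then have nq: "n = q * d" using len mset_eq_length[of es ?target] by simp
  have "mat_diag n (\<lambda>i. ?target ! i) = mat_diag n (\<lambda>i. lam * xi d ^ (i div q))"
    unfolding mat_diag_def nq by (intro eq_matI) auto
  also have "\<dots> = lam \<cdot>\<^sub>m block_diag_roots n d"
    using lam nq count_list_0_iff[of es lam] unfolding q_def
    by (intro mat_diag_eq_smult_block_diag_roots) (auto intro: gr0I)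
  finally have "similar_mat A (lam \<cdot>\<^sub>m block_diag_roots n d)"
    using similar_mat_diag_mset_eq[OF \<open>mset es = mset ?target\<close>] sim len nq similar_mat_trans by auto
  moreover have "lam \<noteq> 0" using roots lam s d by (auto simp: zero_power)
  ultimately show ?thesis using nq by auto
qed

lemma prod_div_blocks: "(\<Prod>i = 0..<q * d. f (i div q)) = (\<Prod>b<d. f b ^ q)"
proof (induct d)
  case (Suc d)
  have "(\<Prod>i = q * d..<q * d + q. f (i div q)) = (\<Prod>i = q * d..<q * d + q. f d)"
  proof (intro prod.cong refl)
    fix i assume "i \<in> {q * d..<q * d + q}"
    then have "i div q = d" by (intro div_nat_eqI) auto
    then show "f (i div q) = f d" by simp
  qed
  then have "(\<Prod>i = q * d..<q * d + q. f (i div q)) = f d ^ q" by simp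
  then show ?case
    using Suc prod.atLeastLessThan_concat[of 0 "q * d" "q * d + q" "\<lambda>i. f (i div q)"]
    by (simp add: algebra_simps)
qed simp

lemma double_sum_lessThan: "2 * (\<Sum>b<d. b) = d * (d - 1 :: nat)"
  by (induct d) (auto simp: algebra_simps)

lemma det_block_diag_roots:
  assumes "d dvd n" and "0 < d"
  shows "det (block_diag_roots n d) = (-1) ^ (n div d * (d - 1))"
proof -
  define q where "q = n div d"
  have n: "n = q * d" using assms unfolding q_def by simp
  have B: "block_diag_roots n d \<in> carrier_mat n n" unfolding block_diag_roots_def by simp
  have "upper_triangular (block_diag_roots n d)"
    unfolding block_diag_roots_def upper_triangular_def by auto
  then have "det (block_diag_roots n d) = prod_list (diag_mat (block_diag_roots n d))"
    using det_upper_triangular B by blast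
  also have "\<dots> = (\<Prod>i = 0..<n. xi n ^ (q * (i div q)))"
    using B unfolding prod_list_diag_prod by (intro prod.cong) (auto simp: block_diag_roots_def q_def)
  also have "\<dots> = (\<Prod>b<d. (xi n ^ (q * b)) ^ q)" unfolding n by (rule prod_div_blocks)
  also have "\<dots> = (\<Prod>b<d. xi d ^ (q * b))"
  proof (intro prod.cong refl)
    fix b
    have "(xi n ^ (q * b)) ^ q = (xi n ^ q) ^ (q * b)" by (simp add: power_mult[symmetric] mult_ac)
    then show "(xi n ^ (q * b)) ^ q = xi d ^ (q * b)" using xi_power_factor[OF n] by (cases "q = 0") auto
  qed
  also have "\<dots> = xi d ^ (q * (\<Sum>b<d. b))" by (simp add: power_sum sum_distrib_left)
  also have "\<dots> = cis pi ^ (q * (d - 1))"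
  proof -
    have S: "2 * real (\<Sum>b<d. b) = real d * real (d - 1)"
      using arg_cong[OF double_sum_lessThan[of d], of real] by (simp only: of_nat_mult of_nat_numeral)
    have "2 * pi * real (q * (\<Sum>b<d. b)) / real d = pi * real q * (2 * real (\<Sum>b<d. b)) / real d"
      by (simp add: algebra_simps)
    also have "\<dots> = real (q * (d - 1)) * pi" unfolding S using assms(2) by (simp add: field_simps)
    finally have "2 * pi * real (q * (\<Sum>b<d. b)) / real d = real (q * (d - 1)) * pi" .
    then show ?thesis unfolding xi_power_eq_cis DeMoivre by simp
  qed
  finally show ?thesis unfolding q_def cis_pi .
qed

lemma similar_mat_SL_conj:
  fixes A B :: "complex mat"
  assumes sim: "similar_mat A B" and A: "A \<in> carrier_mat n n" and n: "0 < n"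
  shows "\<exists>P\<in>SL n. A = P * B * minv P"
proof -
  obtain P Q where wit: "similar_mat_wit A B P Q" using sim unfolding similar_mat_def by auto
  note PQ = similar_mat_witD2[OF A wit]
  have "det P * det Q = 1" using det_mult[OF PQ(6,7)] PQ(1) by simp
  then have detP: "det P \<noteq> 0" by auto
  obtain c where c: "c ^ n = inverse (det P)" using nth_root_exists[OF n] by blast
  with detP n have c0: "c \<noteq> 0" by (auto simp: zero_power)
  define P' where "P' = c \<cdot>\<^sub>m P"
  define Q' where "Q' = inverse c \<cdot>\<^sub>m Q"
  have P': "P' \<in> carrier_mat n n" and Q': "Q' \<in> carrier_mat n n" unfolding P'_def Q'_def using PQ by auto
  have "det P' = 1" unfolding P'_def using PQ(6) c detP by simp
  moreover have P'Q': "P' * Q' = 1\<^sub>m n"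
    unfolding P'_def Q'_def using PQ c0
    by (simp add: mult_smult_assoc_mat[of _ n n _ n] mult_smult_distrib[of _ n n _ n] smult_smult_mat)
  moreover have "A = P' * B * Q'"
    unfolding P'_def Q'_def using PQ c0
    by (simp add: mult_smult_assoc_mat[of _ n n _ n] mult_smult_distrib[of _ n n _ n] smult_smult_mat)
  ultimately show ?thesis using P' minv_eqI[OF P' Q' P'Q'] unfolding SL_def by auto
qed

lemma root_of_sign_eq_xi_power:
  assumes n: "0 < n" and lam: "lam ^ n * (-1) ^ m = 1"
  shows "(even m \<longrightarrow> (\<exists>k. lam = xi n ^ k)) \<and>
    (\<exists>\<mu> k. \<mu>\<^sup>2 = inverse (xi n ^ m) \<and> lam = \<mu> * xi n ^ k)"
proof -
  have "(-1 :: complex) ^ m * (-1) ^ m = 1" by (simp flip: power_add mult_2)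
  then have lam_n: "lam ^ n = (-1) ^ m" using lam by (metis mult.assoc mult_1_right mult_1)
  define \<mu> where "\<mu> = cis (- (pi * real m / real n))"
  have "\<mu>\<^sup>2 = cis (- (2 * pi * real m / real n))" unfolding \<mu>_def DeMoivre by (simp add: mult.assoc)
  also have "\<dots> = inverse (xi n ^ m)" unfolding xi_power_eq_cis cis_inverse ..
  finally have \<mu>2: "\<mu>\<^sup>2 = inverse (xi n ^ m)" .
  have "\<mu> ^ n = cis (- pi) ^ m" unfolding \<mu>_def DeMoivre using n by (simp add: mult.commute)
  also have "cis (- pi) = -1" by (simp flip: cis_inverse add: cis_pi)
  finally have "\<mu> ^ n = (-1) ^ m" .
  then have "(lam / \<mu>) ^ n = 1" using lam_n by (simp add: power_divide \<mu>_def)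
  then obtain k where "lam / \<mu> = xi n ^ k" using root_of_unity_eq_xi_power[OF n] by blast
  then have "lam = \<mu> * xi n ^ k" by (simp add: \<mu>_def field_simps)
  moreover have "\<exists>k. lam = xi n ^ k" if "even m"
    using root_of_unity_eq_xi_power[OF n, of lam] lam_n that by auto
  ultimately show ?thesis using \<mu>2 by blast
qed

theorem mainTheorem2:
  fixes n d :: nat and H :: "complex mat set" and u :: "complex mat"
  assumes "n \<ge> 1"
    and "subgroup_SL n H"
    and "irreducible_SL n H"
    and "u \<in> U n H"
    and "proj_order n u d"
  shows "d dvd n \<and>
    (\<exists>P \<in> SL n. \<exists>lam::complex. lam \<noteq> 0 \<and>
        u = P * (lam \<cdot>\<^sub>m block_diag_roots n d) * minv P \<and>
        ((odd d \<or> (even d \<and> even (n div d))) \<longrightarrow> (\<exists>k::nat. lam = xi n ^ k)) \<and>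
        ((even d \<and> odd (n div d)) \<longrightarrow>
           (\<exists>\<mu>::complex. \<exists>k::nat. \<mu>\<^sup>2 = inverse (xi n ^ ((n div d) * (d - 1))) \<and>
                           lam = \<mu> * xi n ^ k)))"
proof -
  have n: "0 < n" using assms(1) by simp
  have u: "u \<in> carrier_mat n n" and det_u: "det u = 1" using assms(4) unfolding U_def SL_def by auto
  obtain k where d: "0 < d" and ud: "u ^\<^sub>m d = xi n ^ k \<cdot>\<^sub>m 1\<^sub>m n"
    using assms(5) unfolding proj_order_def centre_SL_def by auto
  obtain h where "h \<in> H" "u * h = xi d \<cdot>\<^sub>m (h * u)"
    using xi_in_commutator_scalars[OF n assms(2-5)] unfolding commutator_scalars_def by auto
  then have "order (a * xi d) (char_poly u) = order a (char_poly u)" for a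
    using order_char_poly_twist_invariant[OF u] assms(2) unfolding subgroup_SL_def SL_def by auto
  then obtain lam where dvd: "d dvd n" and lam: "lam \<noteq> 0"
    and sim: "similar_mat u (lam \<cdot>\<^sub>m block_diag_roots n d)"
    using similar_smult_block_diag_roots[OF u n d ud] by auto
  obtain P where P: "P \<in> SL n" "u = P * (lam \<cdot>\<^sub>m block_diag_roots n d) * minv P"
    using similar_mat_SL_conj[OF sim u n] by blast
  have "lam ^ n * (-1) ^ (n div d * (d - 1)) = 1"
    using det_similar[OF sim] det_u det_block_diag_roots[OF dvd d]
    by (simp add: block_diag_roots_def)
  from root_of_sign_eq_xi_power[OF n this] have
    "even (n div d * (d - 1)) \<longrightarrow> (\<exists>k. lam = xi n ^ k)"
    "\<exists>\<mu> k. \<mu>\<^sup>2 = inverse (xi n ^ (n div d * (d - 1))) \<and> lam = \<mu> * xi n ^ k" by auto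
  then show ?thesis using dvd P lam d by auto
qed

end
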